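(* Let $(V,v)$ be a pair of continuous upper and lower probabilities on $(\Omega,\mathcal{F})$. Let $\mathbf{Y}=\{Y_n\}_{n\in\mathbb{N}}$ be a bounded stochastic process (i.e. $\sup_{n,\omega}|Y_n(\omega)|<\infty$) which is stationary on $(\Omega,\mathcal{F},V)$ and ergodic. Then there exists a constant $c$ such that $$v\Big(\Big\{\omega\in\Omega:\ \lim_{n\to\infty}\frac1n\sum_{k=1}^{n}Y_k(\omega)=c\Big\}\Big)=1.$$ If moreover $V$ is concave (equivalently $v$ is convex), then $c\in\left[\int_{\Omega}Y_1\, dv,\int_{\Omega}Y_1\, dV\right]$.
   Context: For a nonempty set $\mathcal{P}$ of finitely additive probabilities on $\mathcal{F}$, $V(A)=\sup_{P\in\mathcal{P}}P(A)$ and $v(A)=\inf_{P\in\mathcal{P}}P(A)$; continuity means $V(A_n)\to V(A)$ whenever $A_n\uparrow A$ or $A_n\downarrow A$ (and likewise for $v$). $V$ is concave if $V(A\cup B)+V(A\cap B)\le V(A)+V(B)$; $v$ is convex if the reverse inequality holds. $\mathbf{Y}$ is stationary on $(\Omega,\mathcal{F},V)$ if for all $n\in\mathbb{N}$, $k\in\mathbb{N}_0$ and Borel $A\subseteq\mathbb{R}^{k+1}$, $V(\{(Y_n,\dots,Y_{n+k})\in A\})=V(\{(Y_{n+1},\dots,Y_{n+1+k})\in A\})$. Let $\mathbb{R}^{\mathbb{N}}$ carry the $\sigma$-algebra $\sigma(\mathcal{C})$ generated by cylinders $\{\mathbf{x}:(x_1,\dots,x_n)\in H\}$, $H\in\mathcal{B}(\mathbb{R}^n)$;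 let $\tau(x_1,x_2,\dots)=(x_2,x_3,\dots)$ be the shift and $V_{\mathbf{Y}}(C)=V(\mathbf{Y}^{-1}(C))$ for $C\in\sigma(\mathcal{C})$, where $\mathbf{Y}(\omega)=(Y_1(\omega),Y_2(\omega),\dots)$. $\mathbf{Y}$ is ergodic if $\tau$ is ergodic with respect to $V_{\mathbf{Y}}$, meaning $\tau$ preserves $V_{\mathbf{Y}}$ and for every $B\in\sigma(\mathcal{C})$ with $\tau^{-1}B=B$: $V_{\mathbf{Y}}(B)\in\{0,1\}$ and ($V_{\mathbf{Y}}(B)=0$ or $V_{\mathbf{Y}}(B^c)=0$). Choquet integral: $\int_{\Omega}\xi\, d\mu=\int_{0}^{\infty}\mu(\{\xi\ge t\})\,dt+\int_{-\infty}^0[\mu(\{\xi\ge t\})-1]\,dt$. *)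

theory Defs
  imports "HOL-Analysis.Analysis"
begin

text \<open>The sample space Omega is the universe of the type 'a; F is a sigma-algebra on it.\<close>

definition fa_prob :: "'a set set \<Rightarrow> ('a set \<Rightarrow> real) \<Rightarrow> bool" where
  "fa_prob F P \<longleftrightarrow> (\<forall>A\<in>F. 0 \<le> P A) \<and> P UNIV = 1 \<and>
     (\<forall>A\<in>F. \<forall>B\<in>F. A \<inter> B = {} \<longrightarrow> P (A \<union> B) = P A + P B)"

definition upper_prob :: "('a set \<Rightarrow> real) set \<Rightarrow> 'a set \<Rightarrow> real" where
  "upper_prob \<P> A = (SUP P\<in>\<P>. P A)"

definition lower_prob :: "('a set \<Rightarrow> real) set \<Rightarrow> 'a set \<Rightarrow> real" where
  "lower_prob \<P> A = (INF P\<in>\<P>. P A)"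

definition continuous_cap :: "'a set set \<Rightarrow> ('a set \<Rightarrow> real) \<Rightarrow> bool" where
  "continuous_cap F \<mu> \<longleftrightarrow>
     (\<forall>A. (\<forall>n. A n \<in> F) \<longrightarrow> incseq A \<longrightarrow> (\<lambda>n. \<mu> (A n)) \<longlonglongrightarrow> \<mu> (\<Union>n. A n)) \<and>
     (\<forall>A. (\<forall>n. A n \<in> F) \<longrightarrow> decseq A \<longrightarrow> (\<lambda>n. \<mu> (A n)) \<longlonglongrightarrow> \<mu> (\<Inter>n. A n))"

definition concave_cap :: "'a set set \<Rightarrow> ('a set \<Rightarrow> real) \<Rightarrow> bool" where
  "concave_cap F \<mu> \<longleftrightarrow> (\<forall>A\<in>F. \<forall>B\<in>F. \<mu> (A \<union> B) + \<mu> (A \<inter> B) \<le> \<mu> A + \<mu> B)"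

definition random_var :: "'a set set \<Rightarrow> ('a \<Rightarrow> real) \<Rightarrow> bool" where
  "random_var F X \<longleftrightarrow> (\<forall>B\<in>sets borel. X -` B \<in> F)"

text \<open>The process is Y 1, Y 2, ... (the value Y 0 plays no role).
  Stationarity: (Y_n,...,Y_{n+k}) is encoded as the function on {0..k}, with
  the Borel sets of R^{k+1} being the product sigma-algebra on {..k} -> real.\<close>

definition stationary :: "('a set \<Rightarrow> real) \<Rightarrow> (nat \<Rightarrow> 'a \<Rightarrow> real) \<Rightarrow> bool" where
  "stationary V Y \<longleftrightarrow> (\<forall>n\<ge>1. \<forall>k::nat. \<forall>A\<in>sets (PiM {..k} (\<lambda>_. borel)).
     V {\<omega>. (\<lambda>i\<in>{..k}. Y (n + i) \<omega>) \<in> A} = V {\<omega>. (\<lambda>i\<in>{..k}. Y (n + 1 + i) \<omega>) \<in> A})"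

text \<open>Sequence space R^N, coordinates 0-based: x 0 is x_1 of the paper.\<close>

definition cylinder_sigma :: "(nat \<Rightarrow> real) set set" where
  "cylinder_sigma = sigma_sets UNIV
     {{x. (\<lambda>i\<in>{..<n}. x i) \<in> H} | n H. 1 \<le> n \<and> H \<in> sets (PiM {..<n} (\<lambda>_. borel))}"

definition shift :: "(nat \<Rightarrow> real) \<Rightarrow> (nat \<Rightarrow> real)" where
  "shift x = (\<lambda>i. x (Suc i))"

definition seq_of :: "(nat \<Rightarrow> 'a \<Rightarrow> real) \<Rightarrow> 'a \<Rightarrow> (nat \<Rightarrow> real)" where
  "seq_of Y \<omega> = (\<lambda>i. Y (Suc i) \<omega>)"

definition dist_cap :: "('a set \<Rightarrow> real) \<Rightarrow> (nat \<Rightarrow> 'a \<Rightarrow> real) \<Rightarrow> (nat \<Rightarrow> real) set \<Rightarrow> real" where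
  "dist_cap V Y C = V (seq_of Y -` C)"

definition ergodic :: "('a set \<Rightarrow> real) \<Rightarrow> (nat \<Rightarrow> 'a \<Rightarrow> real) \<Rightarrow> bool" where
  "ergodic V Y \<longleftrightarrow>
     (\<forall>C\<in>cylinder_sigma. dist_cap V Y (shift -` C) = dist_cap V Y C) \<and>
     (\<forall>B\<in>cylinder_sigma. shift -` B = B \<longrightarrow>
        (dist_cap V Y B = 0 \<or> dist_cap V Y B = 1) \<and>
        (dist_cap V Y B = 0 \<or> dist_cap V Y (- B) = 0))"

definition choquet :: "('a set \<Rightarrow> real) \<Rightarrow> ('a \<Rightarrow> real) \<Rightarrow> real" where
  "choquet \<mu> \<xi> = (LINT t:{0..}|lborel. \<mu> {\<omega>. \<xi> \<omega> \<ge> t})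
                 + (LINT t:{..0}|lborel. \<mu> {\<omega>. \<xi> \<omega> \<ge> t} - 1)"

end

theory Submission
  imports Defs
begin

(* Let c s be the quasi-sure value of the limit superior of the averages of s * Y, for
   s = 1 and s = -1; it exists because ergodicity makes every event "limsup <= q" trivial.
   The heart of the proof is a maximal inequality: for alpha < c s, tile the partial sums of
   s * Y greedily by blocks of length at most N whose average reaches alpha, stepping over the
   "low" starting points from which no such block exists. Under every P in the family the
   expected proportion of low points is at most V of the low event at time 1 (stationarity),
   which tends to 0 as N grows (continuity of V, the low events decreasing into an event of
   upper probability 0). Hence c s is bounded by b + sum beta for every simple majorant of
   s * Y_k whose P-expectations are bounded uniformly by beta. Tiling with s = -1 inside the
   bound for s = 1 gives c 1 + c (-1) <= 0, so the averages converge quasi-surely to c 1, and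
   step-function majorants of Y_1 and -Y_1, compared with Riemann sums of t |-> V {Y_1 >= t}
   and t |-> v {Y_1 >= t}, give the Choquet bounds. *)

definition limsup_avg_le :: "(nat \<Rightarrow> real) \<Rightarrow> real \<Rightarrow> bool" where
  "limsup_avg_le S q \<longleftrightarrow> (\<forall>\<delta>>0. eventually (\<lambda>n. S n \<le> real n * (q + \<delta>)) sequentially)"

lemma eventually_le_real_mult:
  fixes a b :: real
  assumes "0 < a"
  shows "eventually (\<lambda>n. b \<le> real n * a) sequentially"
proof -
  obtain N :: nat where "b / a \<le> real N" using real_arch_simple by blast
  have "b \<le> real n * a" if "N \<le> n" for n
  proof -
    have "b = b / a * a" using assms by simp
    also have "\<dots> \<le> real n * a"
      using assms \<open>b / a \<le> real N\<close> that by (intro mult_right_mono) auto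
    finally show ?thesis .
  qed
  then show ?thesis by (rule eventually_sequentiallyI)
qed

lemma le_real_mult_add_mono:
  fixes q a b :: real
  shows "x \<le> real n * (q + a) \<Longrightarrow> a \<le> b \<Longrightarrow> x \<le> real n * (q + b)"
  by (erule order_trans) (simp add: mult_left_mono)

lemma limsup_avg_le_mono: "limsup_avg_le S q \<Longrightarrow> q \<le> q' \<Longrightarrow> limsup_avg_le S q'"
  unfolding limsup_avg_le_def
  by (auto elim!: eventually_mono order_trans intro!: mult_left_mono)

lemma limsup_avg_le_countable:
  "limsup_avg_le S q \<longleftrightarrow> (\<forall>m. \<exists>N. \<forall>n\<ge>N. S n \<le> real n * (q + 1 / real (Suc m)))"
proof
  assume "\<forall>m. \<exists>N. \<forall>n\<ge>N. S n \<le> real n * (q + 1 / real (Suc m))"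
  then have ev: "eventually (\<lambda>n. S n \<le> real n * (q + 1 / real (Suc m))) sequentially" for m
    by (simp add: eventually_sequentially)
  show "limsup_avg_le S q" unfolding limsup_avg_le_def
  proof (intro allI impI)
    fix \<delta> :: real assume "0 < \<delta>"
    then obtain m where "1 / real (Suc m) < \<delta>"
      using reals_Archimedean by (auto simp: inverse_eq_divide)
    with ev[of m] show "eventually (\<lambda>n. S n \<le> real n * (q + \<delta>)) sequentially"
      by (elim eventually_mono) (erule le_real_mult_add_mono, simp)
  qed
qed (simp add: limsup_avg_le_def eventually_sequentially)

lemma limsup_avg_le_of_plus_inverse:
  assumes "\<And>j. limsup_avg_le S (q + 1 / real (Suc j))"
  shows "limsup_avg_le S q"
  unfolding limsup_avg_le_def
proof (intro allI impI)
  fix \<delta> :: real assume "0 < \<delta>"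
  then obtain j where j: "1 / real (Suc j) < \<delta> / 2"
    using reals_Archimedean[of "\<delta> / 2"] by (auto simp: inverse_eq_divide)
  have "eventually (\<lambda>n. S n \<le> real n * (q + (1 / real (Suc j) + \<delta> / 2))) sequentially"
    using assms[of j] \<open>0 < \<delta>\<close> by (simp add: limsup_avg_le_def add.assoc)
  then show "eventually (\<lambda>n. S n \<le> real n * (q + \<delta>)) sequentially"
    by (elim eventually_mono) (erule le_real_mult_add_mono, use j in simp)
qed

lemma limsup_avg_le_shift: "limsup_avg_le (\<lambda>n. S (Suc n) + a) q \<longleftrightarrow> limsup_avg_le S q"
proof -
  have "eventually (\<lambda>n. S n \<le> real n * (q + \<delta>)) sequentially"
    if "\<forall>\<delta>>0. eventually (\<lambda>n. S (Suc n) + a \<le> real n * (q + \<delta>)) sequentially" "0 < \<delta>" for \<delta>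
  proof -
    have "eventually (\<lambda>n. S (Suc n) + a \<le> real n * (q + \<delta> / 2)) sequentially"
      using that by simp
    moreover have "eventually (\<lambda>n. - a - q - \<delta> \<le> real n * (\<delta> / 2)) sequentially"
      using that(2) by (intro eventually_le_real_mult) simp
    ultimately have "eventually (\<lambda>n. S (Suc n) \<le> real (Suc n) * (q + \<delta>)) sequentially"
    proof eventually_elim
      case (elim n)
      have "real (Suc n) * (q + \<delta>) = real n * (q + \<delta> / 2) + real n * (\<delta> / 2) + (q + \<delta>)"
        by (simp add: algebra_simps)
      with elim show ?case by linarith
    qed
    then show ?thesis using eventually_sequentially_Suc[of "\<lambda>n. S n \<le> real n * (q + \<delta>)"] by blast
  qed
  moreover have "eventually (\<lambda>n. S (Suc n) + a \<le> real n * (q + \<delta>)) sequentially"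
    if "\<forall>\<delta>>0. eventually (\<lambda>n. S n \<le> real n * (q + \<delta>)) sequentially" "0 < \<delta>" for \<delta>
  proof -
    have "eventually (\<lambda>n. S (Suc n) \<le> real (Suc n) * (q + \<delta> / 2)) sequentially"
      using that eventually_sequentially_Suc[of "\<lambda>n. S n \<le> real n * (q + \<delta> / 2)"] by simp
    moreover have "eventually (\<lambda>n. q + \<delta> / 2 + a \<le> real n * (\<delta> / 2)) sequentially"
      using that(2) by (intro eventually_le_real_mult) simp
    ultimately show ?thesis
    proof eventually_elim
      case (elim n)
      have "real (Suc n) * (q + \<delta> / 2) = real n * q + real n * (\<delta> / 2) + (q + \<delta> / 2)"
        "real n * (q + \<delta>) = real n * q + real n * (\<delta> / 2) + real n * (\<delta> / 2)"
        by (simp_all add: algebra_simps)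
      with elim show ?case by linarith
    qed
  qed
  ultimately show ?thesis unfolding limsup_avg_le_def by blast
qed

lemma limsup_avg_le_of_le:
  assumes "\<And>n. 1 \<le> n \<Longrightarrow> S n \<le> real n * q"
  shows "limsup_avg_le S q"
  unfolding limsup_avg_le_def
proof (intro allI impI)
  fix \<delta> :: real assume "0 < \<delta>"
  have "S n \<le> real n * (q + \<delta>)" if "1 \<le> n" for n
    using assms[OF that] le_real_mult_add_mono[of "S n" n q 0 \<delta>] \<open>0 < \<delta>\<close> by simp
  then show "eventually (\<lambda>n. S n \<le> real n * (q + \<delta>)) sequentially"
    by (rule eventually_sequentiallyI)
qed

lemma limsup_avg_le_lower_bound:
  assumes "\<And>n. - (real n * M) \<le> S n" and "limsup_avg_le S q"
  shows "- M \<le> q"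
proof (rule field_le_epsilon)
  fix \<delta> :: real assume "0 < \<delta>"
  then obtain N where N: "\<And>n. N \<le> n \<Longrightarrow> S n \<le> real n * (q + \<delta>)"
    using assms(2) by (auto simp: limsup_avg_le_def eventually_sequentially)
  have "real (Suc N) * (- M) \<le> real (Suc N) * (q + \<delta>)"
    using assms(1)[of "Suc N"] N[of "Suc N"] by simp
  then show "- M \<le> q + \<delta>" by (simp only: mult_le_cancel_left_pos of_nat_0_less_iff zero_less_Suc)
qed

lemma limsup_avg_le_add_nonneg:
  assumes "limsup_avg_le S q" and "limsup_avg_le (\<lambda>n. - S n) q'"
  shows "0 \<le> q + q'"
proof -
  have "limsup_avg_le (\<lambda>n. S n + - S n) (q + q')"
    unfolding limsup_avg_le_def
  proof (intro allI impI)
    fix \<delta> :: real assume "0 < \<delta>"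
    then have "eventually (\<lambda>n. S n \<le> real n * (q + \<delta> / 2)) sequentially"
      "eventually (\<lambda>n. - S n \<le> real n * (q' + \<delta> / 2)) sequentially"
      using assms by (simp_all add: limsup_avg_le_def)
    then show "eventually (\<lambda>n. S n + - S n \<le> real n * (q + q' + \<delta>)) sequentially"
      by eventually_elim (simp add: algebra_simps)
  qed
  then show ?thesis using limsup_avg_le_lower_bound[of 0 "\<lambda>n. S n + - S n" "q + q'"] by simp
qed

lemma tendsto_average_iff:
  "(\<lambda>n. S n / real n) \<longlonglongrightarrow> c \<longleftrightarrow> limsup_avg_le S c \<and> limsup_avg_le (\<lambda>n. - S n) (- c)"
proof -
  have close_iff: "\<bar>S n / real n - c\<bar> \<le> \<delta> \<longleftrightarrow> S n \<le> real n * (c + \<delta>) \<and> - S n \<le> real n * (- c + \<delta>)"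
    if "1 \<le> n" for n and \<delta> :: real
    using that by (auto simp: abs_le_iff field_simps)
  have "(\<lambda>n. S n / real n) \<longlonglongrightarrow> c \<longleftrightarrow>
      (\<forall>\<delta>>0. eventually (\<lambda>n. \<bar>S n / real n - c\<bar> \<le> \<delta>) sequentially)"
    unfolding tendsto_iff dist_real_def
  proof (intro iffI allI impI)
    fix \<delta> :: real
    assume "\<forall>\<delta>>0. eventually (\<lambda>n. \<bar>S n / real n - c\<bar> < \<delta>) sequentially" "0 < \<delta>"
    then have "eventually (\<lambda>n. \<bar>S n / real n - c\<bar> < \<delta>) sequentially" by simp
    then show "eventually (\<lambda>n. \<bar>S n / real n - c\<bar> \<le> \<delta>) sequentially"
      by (rule eventually_mono) simp
  next
    fix \<delta> :: real
    assume "\<forall>\<delta>>0. eventually (\<lambda>n. \<bar>S n / real n - c\<bar> \<le> \<delta>) sequentially" "0 < \<delta>"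
    then have "eventually (\<lambda>n. \<bar>S n / real n - c\<bar> \<le> \<delta> / 2) sequentially"
      using half_gt_zero by blast
    then show "eventually (\<lambda>n. \<bar>S n / real n - c\<bar> < \<delta>) sequentially"
      by (rule eventually_mono) (use \<open>0 < \<delta>\<close> in linarith)
  qed
  also have "\<dots> \<longleftrightarrow> (\<forall>\<delta>>0. eventually (\<lambda>n. S n \<le> real n * (c + \<delta>) \<and> - S n \<le> real n * (- c + \<delta>))
      sequentially)"
    by (intro all_cong1 imp_cong refl eventually_cong eventually_sequentiallyI[of 1]) (rule close_iff)
  finally show ?thesis by (auto simp: limsup_avg_le_def eventually_conj_iff)
qed

(* Greedy tiling of {j..<K}: from an index outside B jump over a block with nonnegative sum,
   from an index in B step by one, paying at most C; the last, incomplete block costs at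
   most C * N. *)
lemma sum_ge_by_tiling:
  fixes z :: "nat \<Rightarrow> real"
  assumes C: "0 \<le> C" and z_ge: "\<And>k. - C \<le> z k"
    and good: "\<And>i. i \<notin> B \<Longrightarrow> \<exists>n\<in>{1..N}. 0 \<le> (\<Sum>k\<in>{i..<i+n}. z k)"
  shows "- C * (\<Sum>i\<in>{j..<K}. indicator B i) - C * real N \<le> (\<Sum>k\<in>{j..<K}. z k)"
proof (induction "K - j" arbitrary: j rule: less_induct)
  case less
  show ?case
  proof (cases "j < K")
    case False then show ?thesis using C by simp
  next
    case jK: True
    show ?thesis
    proof (cases "j \<in> B")
      case True
      have "(\<Sum>i\<in>{j..<K}. indicator B i) = 1 + (\<Sum>i\<in>{Suc j..<K}. indicator B i :: real)"
        "(\<Sum>k\<in>{j..<K}. z k) = z j + (\<Sum>k\<in>{Suc j..<K}. z k)"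
        using jK True by (simp_all add: sum.atLeast_Suc_lessThan)
      moreover have "- C * (\<Sum>i\<in>{Suc j..<K}. indicator B i) - C * real N \<le> (\<Sum>k\<in>{Suc j..<K}. z k)"
        using less[of "Suc j"] jK by simp
      ultimately show ?thesis using z_ge[of j] by (simp add: algebra_simps)
    next
      case False
      then obtain n where n: "n \<in> {1..N}" "0 \<le> (\<Sum>k\<in>{j..<j+n}. z k)" using good by blast
      show ?thesis
      proof (cases "j + n \<le> K")
        case True
        have "- C * (\<Sum>i\<in>{j+n..<K}. indicator B i) - C * real N \<le> (\<Sum>k\<in>{j+n..<K}. z k)"
          using less[of "j + n"] n jK by auto
        moreover have "(\<Sum>i\<in>{j+n..<K}. indicator B i) \<le> (\<Sum>i\<in>{j..<K}. indicator B i :: real)"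
          using True by (intro sum_mono2) auto
        then have "- C * (\<Sum>i\<in>{j..<K}. indicator B i) \<le> - C * (\<Sum>i\<in>{j+n..<K}. indicator B i)"
          using C by (intro mult_left_mono_neg) auto
        ultimately show ?thesis
          using n(2) sum.atLeastLessThan_concat[of j "j + n" K z] True by simp
      next
        case False
        have "- C * real N \<le> - C * real (K - j)"
          using False n(1) C by (intro mult_left_mono_neg) auto
        also have "\<dots> = (\<Sum>k\<in>{j..<K}. - C)" by simp
        also have "\<dots> \<le> (\<Sum>k\<in>{j..<K}. z k)" using z_ge by (rule sum_mono)
        finally have "- C * real N \<le> (\<Sum>k\<in>{j..<K}. z k)" .
        moreover have "0 \<le> C * (\<Sum>i\<in>{j..<K}. indicator B i)"
          using C by (intro mult_nonneg_nonneg sum_nonneg) auto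
        ultimately show ?thesis by simp
      qed
    qed
  qed
qed

lemma le_of_le_plus_div_nat:
  fixes a b d :: real
  assumes "\<And>n::nat. 1 \<le> n \<Longrightarrow> a \<le> d + b / real n"
  shows "a \<le> d"
proof -
  have "(\<lambda>n. d + b / real n) \<longlonglongrightarrow> d + 0"
    by (intro tendsto_add tendsto_const tendsto_divide_0[OF tendsto_const]
        filterlim_at_top_imp_at_infinity filterlim_real_sequentially)
  then show ?thesis using assms by (intro LIMSEQ_le_const[of "\<lambda>n. d + b / real n"]) auto
qed

lemma grid_count_le:
  fixes a y h :: real
  assumes h: "0 < h" and "a \<le> y"
  shows "a + h * card ({..<m} \<inter> {i. a + real i * h \<le> y}) \<le> y + h"
proof -
  define p where "p = nat \<lfloor>(y - a) / h\<rfloor>"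
  have p: "real p \<le> (y - a) / h" unfolding p_def using assms by simp
  have "{..<m} \<inter> {i. a + real i * h \<le> y} \<subseteq> {..p}"
    using h by (auto simp: p_def le_divide_eq le_nat_floor)
  then have "card ({..<m} \<inter> {i. a + real i * h \<le> y}) \<le> p + 1"
    using card_mono[of "{..p}"] by fastforce
  then have "a + h * card ({..<m} \<inter> {i. a + real i * h \<le> y}) \<le> a + h * (real p + 1)"
    using h by (simp del: of_nat_add add: of_nat_add[symmetric])
  also have "\<dots> \<le> a + h * ((y - a) / h + 1)" using p h by simp
  also have "\<dots> = y + h" using h by (simp add: field_simps)
  finally show ?thesis .
qed

lemma le_grid_count:
  fixes a y h :: real
  assumes h: "0 < h" and "a \<le> y" and y_le: "y \<le> a + real m * h"
  shows "y \<le> a + h + h * card ({1..m} \<inter> {i. a + real i * h \<le> y})"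
proof -
  define p where "p = nat \<lfloor>(y - a) / h\<rfloor>"
  have "0 \<le> (y - a) / h" using assms by simp
  then have "real p = \<lfloor>(y - a) / h\<rfloor>" by (simp add: p_def)
  then have p: "(y - a) / h < real p + 1" "real p \<le> (y - a) / h"
    using floor_correct[of "(y - a) / h"] by simp_all
  have "(y - a) / h \<le> real m" using y_le h by (simp add: divide_le_eq)
  then have "p \<le> m" using p(2) by linarith
  have "real p * h \<le> y - a" using p(2) h by (simp add: le_divide_eq)
  moreover have "real i * h \<le> real p * h" if "i \<le> p" for i
    using that h by (intro mult_right_mono) auto
  ultimately have "a + real i * h \<le> y" if "i \<le> p" for i
    using that by fastforce
  then have "{1..p} \<subseteq> {1..m} \<inter> {i. a + real i * h \<le> y}"
    using \<open>p \<le> m\<close> by auto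
  then have p_card: "p \<le> card ({1..m} \<inter> {i. a + real i * h \<le> y})"
    using card_mono[of "{1..m} \<inter> {i. a + real i * h \<le> y}" "{1..p}"] by simp
  have "y = a + h * ((y - a) / h)" using h by simp
  also have "\<dots> \<le> a + h * (real p + 1)" using p h by (intro add_left_mono mult_left_mono) auto
  also have "\<dots> \<le> a + h + h * card ({1..m} \<inter> {i. a + real i * h \<le> y})"
    using p_card h by (simp add: algebra_simps)
  finally show ?thesis .
qed

lemma antimono_integrable_on:
  fixes f :: "real \<Rightarrow> real"
  assumes "antimono f"
  shows "f integrable_on {u..w}"
proof -
  have "mono_on {u..w} (\<lambda>x. - f x)" using assms by (auto simp: mono_on_def antimono_def)
  then have "(\<lambda>x. - (- f x)) integrable_on {u..w}" by (intro integrable_neg integrable_on_mono_on)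
  then show ?thesis by simp
qed

lemma antimono_integral_bounds:
  fixes f :: "real \<Rightarrow> real"
  assumes anti: "antimono f" and h: "0 < h"
  shows "h * (\<Sum>i\<in>{1..m}. f (a + real i * h)) \<le> integral {a..a + real m * h} f \<and>
         integral {a..a + real m * h} f \<le> h * (\<Sum>i<m. f (a + real i * h))"
proof (induction m)
  case (Suc m)
  define x where "x = a + real m * h"
  have x_Suc: "a + real (Suc m) * h = x + h" unfolding x_def by (simp add: algebra_simps)
  have sums: "(\<Sum>i\<in>{1..Suc m}. f (a + real i * h)) = (\<Sum>i\<in>{1..m}. f (a + real i * h)) + f (x + h)"
    "(\<Sum>i<Suc m. f (a + real i * h)) = (\<Sum>i<m. f (a + real i * h)) + f x"
    using x_Suc by (simp_all add: x_def add.assoc)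
  have "integral {a..x} f + integral {x..x+h} f = integral {a..x+h} f"
    using h by (intro Henstock_Kurzweil_Integration.integral_combine antimono_integrable_on anti) (auto simp: x_def)
  moreover have "integral {x..x+h} (\<lambda>_. f (x + h)) \<le> integral {x..x+h} f"
    using anti by (intro integral_le antimono_integrable_on) (auto simp: antimono_def)
  then have "h * f (x + h) \<le> integral {x..x+h} f" using h by (simp add: content_real)
  moreover have "integral {x..x+h} f \<le> integral {x..x+h} (\<lambda>_. f x)"
    using anti by (intro integral_le antimono_integrable_on) (auto simp: antimono_def)
  then have "integral {x..x+h} f \<le> h * f x" using h by (simp add: content_real)
  ultimately show ?case
    using Suc unfolding x_Suc sums x_def[symmetric] by (simp add: distrib_left)
qed simp

lemma set_integrable_bounded_Icc:
  fixes f :: "real \<Rightarrow> real"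
  assumes "f \<in> borel_measurable borel" and "\<And>t. \<bar>f t\<bar> \<le> B"
  shows "set_integrable lborel {u..w} f"
  unfolding set_integrable_def
  using assms by (intro integrableI_bounded_set_indicator[where B=B] emeasure_bounded_finite) auto

lemma borel_measurable_antimono: "antimono (f :: real \<Rightarrow> real) \<Longrightarrow> f \<in> borel_measurable borel"
  using borel_measurable_mono[of "\<lambda>x. - f x"] borel_measurable_uminus[of "\<lambda>x. - f x" borel]
  by (simp add: mono_def antimono_def)

lemma choquet_eq_integral:
  fixes \<mu> :: "'a set \<Rightarrow> real" and \<xi> :: "'a \<Rightarrow> real"
  assumes M: "0 < M" and \<xi>_bounded: "\<And>\<omega>. \<bar>\<xi> \<omega>\<bar> \<le> M"
    and anti: "antimono (\<lambda>t. \<mu> {\<omega>. t \<le> \<xi> \<omega>})"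
    and range: "\<And>t. 0 \<le> \<mu> {\<omega>. t \<le> \<xi> \<omega>} \<and> \<mu> {\<omega>. t \<le> \<xi> \<omega>} \<le> 1"
    and "\<mu> UNIV = 1" "\<mu> {} = 0"
  shows "choquet \<mu> \<xi> = integral {-M..M} (\<lambda>t. \<mu> {\<omega>. t \<le> \<xi> \<omega>}) - M"
proof -
  define f where "f = (\<lambda>t. \<mu> {\<omega>. t \<le> \<xi> \<omega>})"
  have f_low: "f t = 1" if "t \<le> - M" for t
    using that \<xi>_bounded \<open>\<mu> UNIV = 1\<close> unfolding f_def
    by (metis (mono_tags) UNIV_eq_I abs_le_iff mem_Collect_eq minus_le_iff order_trans)
  have f_high: "f t = 0" if "M < t" for t
    using that \<xi>_bounded \<open>\<mu> {} = 0\<close> unfolding f_def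
    by (metis (mono_tags) empty_Collect_eq abs_le_iff linorder_not_le order_trans)
  have f_meas: "f \<in> borel_measurable borel" "(\<lambda>t. f t - 1) \<in> borel_measurable borel"
    using borel_measurable_antimono[OF anti] by (simp_all add: f_def[symmetric])
  have "(LINT t:{0..}|lborel. f t) = (LINT t:{0..M}|lborel. f t)"
    unfolding set_lebesgue_integral_def
    by (rule Bochner_Integration.integral_cong) (auto simp: indicator_def f_high not_le)
  also have "\<dots> = integral {0..M} f"
    using range f_meas by (intro set_borel_integral_eq_integral(2) set_integrable_bounded_Icc[where B=1])
      (auto simp: f_def abs_le_iff)
  finally have pos: "(LINT t:{0..}|lborel. f t) = integral {0..M} f" .
  have "(LINT t:{..0}|lborel. f t - 1) = (LINT t:{-M..0}|lborel. f t - 1)"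
    unfolding set_lebesgue_integral_def
    by (rule Bochner_Integration.integral_cong) (auto simp: indicator_def f_low not_le)
  also have "\<dots> = integral {-M..0} (\<lambda>t. f t - 1)"
    using range f_meas by (intro set_borel_integral_eq_integral(2) set_integrable_bounded_Icc[where B=1])
      (auto simp: f_def abs_le_iff)
  also have "\<dots> = integral {-M..0} f - M"
    using M anti by (subst integral_diff) (auto intro: antimono_integrable_on simp: f_def content_real)
  finally have neg: "(LINT t:{..0}|lborel. f t - 1) = integral {-M..0} f - M" .
  have "integral {-M..0} f + integral {0..M} f = integral {-M..M} f"
    using M anti by (intro Henstock_Kurzweil_Integration.integral_combine antimono_integrable_on) (auto simp: f_def)
  then show ?thesis using pos neg by (simp add: choquet_def f_def)
qed

locale prob_family =
  fixes F :: "'a set set" and PP :: "('a set \<Rightarrow> real) set"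
  assumes sigma_algebra_F: "sigma_algebra UNIV F"
    and PP_nonempty: "PP \<noteq> {}"
    and fa_prob_PP: "\<forall>P\<in>PP. fa_prob F P"
begin

sublocale F: sigma_algebra UNIV F by (rule sigma_algebra_F)

abbreviation "V \<equiv> upper_prob PP"
abbreviation "v \<equiv> lower_prob PP"

lemma F_Compl [intro]: "A \<in> F \<Longrightarrow> - A \<in> F"
  using F.compl_sets by (simp add: Compl_eq_Diff_UNIV)

lemma F_UN [intro]: "(\<And>n::nat. A n \<in> F) \<Longrightarrow> (\<Union>n. A n) \<in> F"
  using F.countable_UN[of A UNIV] by auto

lemma F_INT [intro]: "(\<And>n::nat. A n \<in> F) \<Longrightarrow> (\<Inter>n. A n) \<in> F"
  using F.countable_INT[of A UNIV] by auto

context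
  fixes P assumes P: "P \<in> PP"
begin

lemma P_nonneg: "A \<in> F \<Longrightarrow> 0 \<le> P A"
  using fa_prob_PP P unfolding fa_prob_def by auto

lemma P_UNIV: "P UNIV = 1"
  using fa_prob_PP P unfolding fa_prob_def by auto

lemma P_add: "A \<in> F \<Longrightarrow> B \<in> F \<Longrightarrow> A \<inter> B = {} \<Longrightarrow> P (A \<union> B) = P A + P B"
  using fa_prob_PP P unfolding fa_prob_def by auto

lemma P_empty: "P {} = 0"
  using P_add[of "{}" "{}"] by simp

lemma P_Diff: "A \<in> F \<Longrightarrow> B \<in> F \<Longrightarrow> B \<subseteq> A \<Longrightarrow> P (A - B) = P A - P B"
  using P_add[of B "A - B"] F.Diff[of A B] by (simp add: Un_absorb1)

lemma P_mono: "A \<in> F \<Longrightarrow> B \<in> F \<Longrightarrow> A \<subseteq> B \<Longrightarrow> P A \<le> P B"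
  using P_Diff[of B A] P_nonneg[of "B - A"] by auto

lemma P_le_1: "A \<in> F \<Longrightarrow> P A \<le> 1"
  using P_mono[of A UNIV] P_UNIV by simp

lemma P_Compl: "A \<in> F \<Longrightarrow> P (- A) = 1 - P A"
  using P_Diff[of UNIV A] P_UNIV by (simp add: Compl_eq_Diff_UNIV)

lemma P_Un_le: "A \<in> F \<Longrightarrow> B \<in> F \<Longrightarrow> P (A \<union> B) \<le> P A + P B"
  using P_add[of A "B - A"] P_mono[of "B - A" B] F.Diff[of B A] by auto

(* P is only finitely additive, so it is integrated against simple functions only. *)
lemma simple_fun_lower_bound_on:
  fixes E :: "'i \<Rightarrow> 'a set" and w :: "'i \<Rightarrow> real"
  assumes "finite I" and "\<And>i. i \<in> I \<Longrightarrow> E i \<in> F" and "D \<in> F"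
    and "\<And>\<omega>. \<omega> \<in> D \<Longrightarrow> a \<le> (\<Sum>i\<in>I. w i * indicator (E i) \<omega>)"
  shows "a * P D \<le> (\<Sum>i\<in>I. w i * P (E i \<inter> D))"
  using assms
proof (induction I arbitrary: a D rule: finite_induct)
  case empty
  then show ?case
    by (cases "D = {}") (auto simp: P_empty intro!: mult_nonpos_nonneg P_nonneg)
next
  case (insert j I)
  define D1 where "D1 = D \<inter> E j"
  define D2 where "D2 = D - E j"
  have D12: "D1 \<in> F" "D2 \<in> F" "D1 \<inter> D2 = {}" "D = D1 \<union> D2"
    using insert.prems unfolding D1_def D2_def by auto
  have split: "P (A \<inter> D) = P (A \<inter> D1) + P (A \<inter> D2)" if "A \<in> F" for A
    using P_add[of "A \<inter> D1" "A \<inter> D2"] that D12 by (auto simp: Int_Un_distrib)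
  have sum_insert: "(\<Sum>i\<in>insert j I. w i * indicator (E i) \<omega>) =
      w j * indicator (E j) \<omega> + (\<Sum>i\<in>I. w i * indicator (E i) \<omega>)" for \<omega>
    using insert.hyps by (rule sum.insert)
  have "a - w j \<le> (\<Sum>i\<in>I. w i * indicator (E i) \<omega>)" if "\<omega> \<in> D1" for \<omega>
    using insert.prems(3)[of \<omega>] sum_insert[of \<omega>] that by (simp add: D1_def)
  then have "(a - w j) * P D1 \<le> (\<Sum>i\<in>I. w i * P (E i \<inter> D1))"
    using insert.prems D12 by (intro insert.IH) auto
  moreover have "a \<le> (\<Sum>i\<in>I. w i * indicator (E i) \<omega>)" if "\<omega> \<in> D2" for \<omega>
    using insert.prems(3)[of \<omega>] sum_insert[of \<omega>] that by (simp add: D2_def)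
  then have "a * P D2 \<le> (\<Sum>i\<in>I. w i * P (E i \<inter> D2))"
    using insert.prems D12 by (intro insert.IH) auto
  moreover have "a * P D = (a - w j) * P D1 + w j * P D1 + a * P D2"
    using split[of UNIV] by (simp add: algebra_simps)
  moreover have "(\<Sum>i\<in>I. w i * P (E i \<inter> D)) =
      (\<Sum>i\<in>I. w i * P (E i \<inter> D1)) + (\<Sum>i\<in>I. w i * P (E i \<inter> D2))"
    unfolding sum.distrib[symmetric]
    by (rule sum.cong) (simp_all add: split insert.prems(1) distrib_left)
  moreover have "E j \<inter> D = D1" unfolding D1_def by auto
  ultimately show ?case using insert.hyps by simp
qed

lemma simple_fun_lower_bound:
  fixes E :: "'i \<Rightarrow> 'a set" and w :: "'i \<Rightarrow> real"
  assumes "finite I" and "\<And>i. i \<in> I \<Longrightarrow> E i \<in> F"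
    and "\<And>\<omega>. a \<le> (\<Sum>i\<in>I. w i * indicator (E i) \<omega>)"
  shows "a \<le> (\<Sum>i\<in>I. w i * P (E i))"
  using simple_fun_lower_bound_on[where D=UNIV, OF assms(1,2)] assms(3) P_UNIV by simp

lemma simple_fun_lower_bound2:
  fixes E :: "'i \<Rightarrow> 'a set" and G :: "'j \<Rightarrow> 'a set" and w :: "'i \<Rightarrow> real" and u :: "'j \<Rightarrow> real"
  assumes "finite I" "finite J" and "\<And>i. i \<in> I \<Longrightarrow> E i \<in> F" and "\<And>j. j \<in> J \<Longrightarrow> G j \<in> F"
    and "\<And>\<omega>. a \<le> (\<Sum>i\<in>I. w i * indicator (E i) \<omega>) + (\<Sum>j\<in>J. u j * indicator (G j) \<omega>)"
  shows "a \<le> (\<Sum>i\<in>I. w i * P (E i)) + (\<Sum>j\<in>J. u j * P (G j))"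
proof -
  have Plus: "(\<Sum>x\<in>I <+> J. f x) = (\<Sum>i\<in>I. f (Inl i)) + (\<Sum>j\<in>J. f (Inr j))" for f :: "_ \<Rightarrow> real"
    using sum.Plus[OF assms(1,2)] by (simp add: comp_def)
  have "a \<le> (\<Sum>x\<in>I <+> J. case_sum w u x * P (case_sum E G x))"
    using assms by (intro simple_fun_lower_bound) (auto simp: Plus)
  then show ?thesis by (simp add: Plus)
qed

end

lemma P_le_V: "P \<in> PP \<Longrightarrow> A \<in> F \<Longrightarrow> P A \<le> V A"
  unfolding upper_prob_def using P_le_1 by (auto intro!: cSUP_upper bdd_aboveI)

lemma V_least: "(\<And>P. P \<in> PP \<Longrightarrow> P A \<le> c) \<Longrightarrow> V A \<le> c"
  unfolding upper_prob_def using PP_nonempty by (auto intro: cSUP_least)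

lemma v_le_P: "P \<in> PP \<Longrightarrow> A \<in> F \<Longrightarrow> v A \<le> P A"
  unfolding lower_prob_def using P_nonneg by (auto intro!: cINF_lower bdd_belowI)

lemma v_greatest: "(\<And>P. P \<in> PP \<Longrightarrow> c \<le> P A) \<Longrightarrow> c \<le> v A"
  unfolding lower_prob_def using PP_nonempty by (auto intro: cINF_greatest)

lemma some_P: obtains P where "P \<in> PP"
  using PP_nonempty by auto

lemma V_nonneg: "A \<in> F \<Longrightarrow> 0 \<le> V A"
  by (metis some_P P_le_V P_nonneg order_trans)

lemma V_le_1: "A \<in> F \<Longrightarrow> V A \<le> 1"
  using P_le_1 by (auto intro: V_least)

lemma V_empty [simp]: "V {} = 0"
  using V_nonneg[of "{}"] by (intro antisym V_least) (auto simp: P_empty)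

lemma V_UNIV [simp]: "V UNIV = 1"
  by (metis some_P P_UNIV P_le_V F.top V_le_1 antisym)

lemma V_mono: "A \<in> F \<Longrightarrow> B \<in> F \<Longrightarrow> A \<subseteq> B \<Longrightarrow> V A \<le> V B"
  by (rule V_least) (meson P_le_V P_mono order_trans)

lemma V_Un_le: "A \<in> F \<Longrightarrow> B \<in> F \<Longrightarrow> V (A \<union> B) \<le> V A + V B"
  by (rule V_least) (meson P_Un_le P_le_V add_mono order_trans)

lemma V_eq_0_Un: "A \<in> F \<Longrightarrow> B \<in> F \<Longrightarrow> V A = 0 \<Longrightarrow> V B = 0 \<Longrightarrow> V (A \<union> B) = 0"
  using V_Un_le[of A B] V_nonneg[of "A \<union> B"] by auto

lemma V_eq_0_subset: "A \<in> F \<Longrightarrow> B \<in> F \<Longrightarrow> A \<subseteq> B \<Longrightarrow> V B = 0 \<Longrightarrow> V A = 0"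
  using V_mono[of A B] V_nonneg[of A] by simp

lemma v_eq_1_minus_V_Compl: "A \<in> F \<Longrightarrow> v A = 1 - V (- A)"
proof (rule antisym)
  assume A: "A \<in> F"
  show "1 - V (- A) \<le> v A"
  proof (rule v_greatest)
    fix P assume "P \<in> PP"
    then have "P (- A) \<le> V (- A)" using A by (intro P_le_V) auto
    with \<open>P \<in> PP\<close> A show "1 - V (- A) \<le> P A" using P_Compl[of P A] by simp
  qed
  have "V (- A) \<le> 1 - v A"
  proof (rule V_least)
    fix P assume "P \<in> PP"
    then show "P (- A) \<le> 1 - v A" using A v_le_P[of P A] P_Compl[of P A] by auto
  qed
  then show "v A \<le> 1 - V (- A)" by simp
qed

lemma v_mono: "A \<in> F \<Longrightarrow> B \<in> F \<Longrightarrow> A \<subseteq> B \<Longrightarrow> v A \<le> v B"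
  using V_mono[of "- B" "- A"] by (simp add: v_eq_1_minus_V_Compl F_Compl)

lemma v_nonneg: "A \<in> F \<Longrightarrow> 0 \<le> v A"
  using V_le_1[of "- A"] by (simp add: v_eq_1_minus_V_Compl F_Compl)

lemma v_le_1: "A \<in> F \<Longrightarrow> v A \<le> 1"
  using V_nonneg[of "- A"] by (simp add: v_eq_1_minus_V_Compl F_Compl)

lemma v_UNIV [simp]: "v UNIV = 1"
  by (simp add: v_eq_1_minus_V_Compl)

lemma v_empty [simp]: "v {} = 0"
  by (simp add: v_eq_1_minus_V_Compl)

end

definition cylinder_space :: "(nat \<Rightarrow> real) measure" where
  "cylinder_space = sigma UNIV
     {{x. (\<lambda>i\<in>{..<n}. x i) \<in> H} | n H. 1 \<le> n \<and> H \<in> sets (PiM {..<n} (\<lambda>_. borel))}"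

lemma sets_cylinder_space [simp]: "sets cylinder_space = cylinder_sigma"
  unfolding cylinder_space_def cylinder_sigma_def by (subst sets_measure_of) auto

lemma space_cylinder_space [simp]: "space cylinder_space = UNIV"
  unfolding cylinder_space_def by simp

lemma measurable_coordinate [measurable]: "(\<lambda>x. x i) \<in> borel_measurable cylinder_space"
proof (rule measurableI)
  fix A :: "real set" assume "A \<in> sets borel"
  define H where "H = (\<lambda>z. z i) -` A \<inter> space (PiM {..<Suc i} (\<lambda>_. borel :: real measure))"
  have "H \<in> sets (PiM {..<Suc i} (\<lambda>_. borel))"
    unfolding H_def using \<open>A \<in> sets borel\<close>
    by (intro measurable_sets[OF measurable_component_singleton]) auto
  moreover have "(\<lambda>x. x i) -` A \<inter> space cylinder_space = {x. (\<lambda>j\<in>{..<Suc i}. x j) \<in> H}"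
    unfolding H_def by (auto simp: space_PiM)
  ultimately have "(\<lambda>x. x i) -` A \<inter> space cylinder_space \<in>
      {{x. (\<lambda>i\<in>{..<n}. x i) \<in> H} | n H. 1 \<le> n \<and> H \<in> sets (PiM {..<n} (\<lambda>_. borel))}"
    by (intro CollectI exI[of _ "Suc i"] exI[of _ H]) simp
  then show "(\<lambda>x. x i) -` A \<inter> space cylinder_space \<in> sets cylinder_space"
    unfolding sets_cylinder_space cylinder_sigma_def by (rule sigma_sets.Basic)
qed simp

lemma measurable_seq_of:
  fixes Y :: "nat \<Rightarrow> 'a \<Rightarrow> real"
  assumes "\<And>n. Y (Suc n) \<in> borel_measurable M"
  shows "seq_of Y \<in> M \<rightarrow>\<^sub>M cylinder_space"
  unfolding cylinder_space_def
proof (rule measurable_measure_of)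
  fix C assume "C \<in> {{x :: nat \<Rightarrow> real. (\<lambda>i\<in>{..<n}. x i) \<in> H} | n H. 1 \<le> n \<and> H \<in> sets (PiM {..<n} (\<lambda>_. borel))}"
  then obtain n H where C: "C = {x. (\<lambda>i\<in>{..<n}. x i) \<in> H}"
    and H: "H \<in> sets (PiM {..<n} (\<lambda>_. borel))" by blast
  have "(\<lambda>\<omega>. \<lambda>i\<in>{..<n}. Y (Suc i) \<omega>) \<in> M \<rightarrow>\<^sub>M PiM {..<n} (\<lambda>_. borel)"
    using assms by (intro measurable_restrict) auto
  from measurable_sets[OF this H]
  show "seq_of Y -` C \<inter> space M \<in> sets M"
    by (simp add: C seq_of_def vimage_def)
qed auto

definition limsup_avg_le_set :: "real \<Rightarrow> real \<Rightarrow> (nat \<Rightarrow> real) set" where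
  "limsup_avg_le_set s q = {x. limsup_avg_le (\<lambda>n. \<Sum>k<n. s * x k) q}"

lemma limsup_avg_le_set_in_cylinder_sigma: "limsup_avg_le_set s q \<in> cylinder_sigma"
proof -
  have "{x \<in> space cylinder_space. \<forall>m::nat. \<exists>N::nat. \<forall>n\<ge>N.
      (\<Sum>k<n. s * x k) \<le> real n * (q + 1 / real (Suc m))} \<in> sets cylinder_space"
  proof -
    have "{x \<in> space cylinder_space. (\<Sum>k<n. s * x k) \<le> c} \<in> sets cylinder_space" for n c
      by measurable
    then show ?thesis
      by (intro sets.sets_Collect_countable_All sets.sets_Collect_countable_Ex
          sets.sets_Collect_imp sets.sets_Collect_const)
  qed
  then show ?thesis by (simp add: limsup_avg_le_set_def limsup_avg_le_countable)
qed

lemma shift_vimage_limsup_avg_le_set: "shift -` limsup_avg_le_set s q = limsup_avg_le_set s q"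
proof -
  have "(\<lambda>n. \<Sum>k<n. s * shift x k) = (\<lambda>n. (\<Sum>k<Suc n. s * x k) + - (s * x 0))" for x
    unfolding shift_def sum.lessThan_Suc_shift by simp
  then have "limsup_avg_le (\<lambda>n. \<Sum>k<n. s * shift x k) q \<longleftrightarrow> limsup_avg_le (\<lambda>n. \<Sum>k<n. s * x k) q" for x
    using limsup_avg_le_shift[of "\<lambda>n. \<Sum>k<n. s * x k" "- (s * x 0)" q] by simp
  then show ?thesis by (auto simp: limsup_avg_le_set_def)
qed

lemma measurable_PiM_coordinate: "(\<lambda>z. z i) \<in> borel_measurable (PiM I (\<lambda>_. borel :: real measure))"
proof (cases "i \<in> I")
  case False
  have "z i = undefined" if "z \<in> space (PiM I (\<lambda>_. borel :: real measure))" for z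
    using that False by (simp add: space_PiM PiE_def extensional_def)
  then show ?thesis by (subst measurable_cong[where g="\<lambda>_. undefined"]) simp_all
qed (rule measurable_component_singleton)

locale ergodic_process = prob_family F PP
  for F :: "'a set set" and PP :: "('a set \<Rightarrow> real) set" +
  fixes Y :: "nat \<Rightarrow> 'a \<Rightarrow> real" and M :: real
  assumes V_continuous: "continuous_cap F (upper_prob PP)"
    and random_var_Y: "\<forall>n\<ge>1. random_var F (Y n)"
    and Y_bounded: "\<forall>n\<ge>1. \<forall>\<omega>. \<bar>Y n \<omega>\<bar> \<le> M"
    and stationary_Y: "stationary (upper_prob PP) Y"
    and ergodic_Y: "ergodic (upper_prob PP) Y"
    and M_pos: "0 < M"
begin

definition "sample_space = sigma UNIV F"

lemma sets_sample_space [simp]: "sets sample_space = F"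
  unfolding sample_space_def using sigma_algebra_F by (simp add: sigma_algebra.sigma_sets_eq)

lemma space_sample_space [simp]: "space sample_space = UNIV"
  unfolding sample_space_def by simp

lemma measurable_Y [measurable]: "Y (Suc n) \<in> borel_measurable sample_space"
  using random_var_Y by (auto simp: random_var_def measurable_def)

lemma abs_Y_le: "\<bar>Y (Suc k) \<omega>\<bar> \<le> M"
  using Y_bounded by simp

lemma abs_mult_Y_le: "\<bar>s\<bar> \<le> 1 \<Longrightarrow> \<bar>s * Y (Suc k) \<omega>\<bar> \<le> M"
  using mult_mono[OF _ abs_Y_le, of "\<bar>s\<bar>" 1] by (simp add: abs_mult)

lemma abs_partial_sum_le:
  assumes "\<bar>s\<bar> \<le> 1"
  shows "\<bar>\<Sum>k<n. s * Y (Suc k) \<omega>\<bar> \<le> real n * M"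
proof -
  have "\<bar>\<Sum>k<n. s * Y (Suc k) \<omega>\<bar> \<le> (\<Sum>k<n. \<bar>s * Y (Suc k) \<omega>\<bar>)" by (rule sum_abs)
  also have "\<dots> \<le> (\<Sum>k<n. M)" using assms by (intro sum_mono abs_mult_Y_le)
  finally show ?thesis by simp
qed

lemma V_eq_0_UN:
  fixes A :: "nat \<Rightarrow> 'a set"
  assumes A: "\<And>n. A n \<in> F" "\<And>n. V (A n) = 0"
  shows "V (\<Union>n. A n) = 0"
proof -
  define B where "B n = (\<Union>i\<le>n. A i)" for n
  have B_Suc: "B (Suc n) = B n \<union> A (Suc n)" for n
    by (auto simp: B_def atMost_Suc)
  have "B 0 = A 0" by (simp add: B_def)
  then have B: "B n \<in> F \<and> V (B n) = 0" for n
    by (induction n) (auto simp: B_Suc A V_eq_0_Un)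
  have "incseq B" by (rule incseq_SucI) (auto simp: B_Suc)
  then have "(\<lambda>n. V (B n)) \<longlonglongrightarrow> V (\<Union>n. B n)"
    using V_continuous B unfolding continuous_cap_def by blast
  moreover have "(\<Union>n. B n) = (\<Union>n. A n)" by (auto simp: B_def)
  ultimately show ?thesis using B LIMSEQ_unique[OF _ tendsto_const[of 0]] by simp
qed

lemma V_decseq_tendsto: "(\<And>n. A n \<in> F) \<Longrightarrow> decseq A \<Longrightarrow> (\<lambda>n. V (A n)) \<longlonglongrightarrow> V (\<Inter>n. A n)"
  using V_continuous unfolding continuous_cap_def by blast

definition window :: "nat \<Rightarrow> nat \<Rightarrow> 'a \<Rightarrow> nat \<Rightarrow> real" where
  "window j k \<omega> = (\<lambda>i\<in>{..k}. Y (j + 1 + i) \<omega>)"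

lemma measurable_window: "window j k \<in> sample_space \<rightarrow>\<^sub>M PiM {..k} (\<lambda>_. borel)"
  unfolding window_def[abs_def] using measurable_Y by (intro measurable_restrict) simp

lemma window_vimage_in_F: "A \<in> sets (PiM {..k} (\<lambda>_. borel)) \<Longrightarrow> window j k -` A \<in> F"
  using measurable_sets[OF measurable_window] by simp

lemma V_window_vimage:
  assumes "A \<in> sets (PiM {..k} (\<lambda>_. borel))"
  shows "V (window j k -` A) = V (window 0 k -` A)"
proof (induction j)
  case (Suc j)
  have "\<forall>k. \<forall>A\<in>sets (PiM {..k} (\<lambda>_. borel)).
      V {\<omega>. (\<lambda>i\<in>{..k}. Y (Suc j + i) \<omega>) \<in> A} = V {\<omega>. (\<lambda>i\<in>{..k}. Y (Suc j + 1 + i) \<omega>) \<in> A}"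
    using stationary_Y unfolding stationary_def by (elim allE[of _ "Suc j"]) simp
  then have "V {\<omega>. (\<lambda>i\<in>{..k}. Y (Suc j + i) \<omega>) \<in> A} = V {\<omega>. (\<lambda>i\<in>{..k}. Y (Suc j + 1 + i) \<omega>) \<in> A}"
    using assms by blast
  moreover have "window j k = (\<lambda>\<omega>. \<lambda>i\<in>{..k}. Y (Suc j + i) \<omega>)"
    unfolding window_def by simp
  ultimately have "V (window (Suc j) k -` A) = V (window j k -` A)"
    by (simp only: vimage_def window_def)
  then show ?case using Suc by simp
qed simp

definition avg_event :: "real \<Rightarrow> real \<Rightarrow> 'a set" where
  "avg_event s q = seq_of Y -` limsup_avg_le_set s q"

lemma mem_avg_event: "\<omega> \<in> avg_event s q \<longleftrightarrow> limsup_avg_le (\<lambda>n. \<Sum>k<n. s * Y (Suc k) \<omega>) q"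
  by (simp add: avg_event_def limsup_avg_le_set_def seq_of_def)

lemma avg_event_in_F: "avg_event s q \<in> F"
proof -
  have "seq_of Y \<in> sample_space \<rightarrow>\<^sub>M cylinder_space"
    by (rule measurable_seq_of) (rule measurable_Y)
  from measurable_sets[OF this] show ?thesis
    using limsup_avg_le_set_in_cylinder_sigma by (simp add: avg_event_def)
qed

lemma V_avg_event_trivial: "V (avg_event s q) = 0 \<or> V (- avg_event s q) = 0"
proof -
  have "dist_cap V Y (limsup_avg_le_set s q) = 0 \<or> dist_cap V Y (- limsup_avg_le_set s q) = 0"
    using ergodic_Y[unfolded ergodic_def, THEN conjunct2, rule_format,
        OF limsup_avg_le_set_in_cylinder_sigma shift_vimage_limsup_avg_le_set]
    by (rule conjunct2)
  then show ?thesis by (simp add: dist_cap_def avg_event_def vimage_Compl)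
qed

lemma avg_event_mono: "q \<le> q' \<Longrightarrow> avg_event s q \<subseteq> avg_event s q'"
  using limsup_avg_le_mono by (auto simp: mem_avg_event)

lemma avg_event_M_eq_UNIV:
  assumes "\<bar>s\<bar> \<le> 1"
  shows "avg_event s M = UNIV"
proof -
  have "limsup_avg_le (\<lambda>n. \<Sum>k<n. s * Y (Suc k) \<omega>) M" for \<omega>
    by (rule limsup_avg_le_of_le) (use abs_partial_sum_le[OF assms] abs_le_iff in blast)
  then show ?thesis by (auto simp: mem_avg_event)
qed

lemma lower_bound_of_mem_avg_event:
  assumes "\<bar>s\<bar> \<le> 1" and "\<omega> \<in> avg_event s q"
  shows "- M \<le> q"
proof -
  have "- (real n * M) \<le> (\<Sum>k<n. s * Y (Suc k) \<omega>)" for n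
    using abs_partial_sum_le[OF assms(1), where n=n and \<omega>=\<omega>] by linarith
  from limsup_avg_le_lower_bound[OF this] show ?thesis using assms(2) by (simp add: mem_avg_event)
qed

definition limsup_const :: "real \<Rightarrow> real" where
  "limsup_const s = Inf {q. V (- avg_event s q) = 0}"

lemma limsup_const_bdd_below:
  assumes "\<bar>s\<bar> \<le> 1"
  shows "bdd_below {q. V (- avg_event s q) = 0}"
proof (rule bdd_belowI)
  fix q assume "q \<in> {q. V (- avg_event s q) = 0}"
  then have "avg_event s q \<noteq> {}" by auto
  then show "- M \<le> q" using lower_bound_of_mem_avg_event[OF assms] by blast
qed

lemma V_Compl_avg_event_gt:
  assumes s: "\<bar>s\<bar> \<le> 1" and q: "limsup_const s < q"
  shows "V (- avg_event s q) = 0"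
proof -
  have "M \<in> {q. V (- avg_event s q) = 0}" using avg_event_M_eq_UNIV[OF s] by simp
  then obtain x where x: "V (- avg_event s x) = 0" "x < q"
    using cInf_lessD[of "{q. V (- avg_event s q) = 0}" q] q unfolding limsup_const_def by blast
  have "- avg_event s q \<subseteq> - avg_event s x"
    using avg_event_mono[of x q s] x(2) by auto
  from V_eq_0_subset[OF F_Compl[OF avg_event_in_F] F_Compl[OF avg_event_in_F] this x(1)]
  show ?thesis .
qed

lemma V_Compl_avg_event:
  assumes s: "\<bar>s\<bar> \<le> 1" and q: "limsup_const s \<le> q"
  shows "V (- avg_event s q) = 0"
proof -
  have "(\<Inter>j. avg_event s (q + 1 / real (Suc j))) \<subseteq> avg_event s q"
  proof
    fix \<omega> assume "\<omega> \<in> (\<Inter>j. avg_event s (q + 1 / real (Suc j)))"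
    then have "\<omega> \<in> avg_event s (q + 1 / real (Suc j))" for j by blast
    then show "\<omega> \<in> avg_event s q" unfolding mem_avg_event by (rule limsup_avg_le_of_plus_inverse)
  qed
  then have sub: "- avg_event s q \<subseteq> (\<Union>j. - avg_event s (q + 1 / real (Suc j)))" by auto
  have "limsup_const s < q + 1 / real (Suc j)" for j
    using q divide_pos_pos[of 1 "real (Suc j)"] by linarith
  then have "V (\<Union>j. - avg_event s (q + 1 / real (Suc j))) = 0"
    by (intro V_eq_0_UN V_Compl_avg_event_gt[OF s] F_Compl avg_event_in_F)
  moreover have "(\<Union>j. - avg_event s (q + 1 / real (Suc j))) \<in> F"
    by (intro F_UN F_Compl avg_event_in_F)
  ultimately show ?thesis using V_eq_0_subset[OF F_Compl[OF avg_event_in_F] _ sub] by blast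
qed

lemma V_avg_event:
  assumes s: "\<bar>s\<bar> \<le> 1" and q: "q < limsup_const s"
  shows "V (avg_event s q) = 0"
proof (rule ccontr)
  assume "V (avg_event s q) \<noteq> 0"
  then have "V (- avg_event s q) = 0" using V_avg_event_trivial[of s q] by blast
  then have "limsup_const s \<le> q"
    unfolding limsup_const_def by (intro cInf_lower limsup_const_bdd_below[OF s]) simp
  with q show False by linarith
qed

(* Starting points from which the tiling in the maximal inequality can only step by one. *)
definition low_window :: "real \<Rightarrow> real \<Rightarrow> nat \<Rightarrow> nat \<Rightarrow> 'a set" where
  "low_window s \<alpha> N j = {\<omega>. \<forall>n\<in>{1..N}. (\<Sum>i<n. s * Y (j + 1 + i) \<omega>) < real n * \<alpha>}"

lemma low_window_eq_vimage:
  "low_window s \<alpha> N j = window j N -`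
     {z \<in> space (PiM {..N} (\<lambda>_. borel)). \<forall>n\<in>{1..N}. (\<Sum>i<n. s * z i) < real n * \<alpha>}"
proof -
  have "(\<Sum>i<n. s * window j N \<omega> i) = (\<Sum>i<n. s * Y (j + 1 + i) \<omega>)" if "n \<le> N" for n \<omega>
    using that by (intro sum.cong) (auto simp: window_def)
  moreover have "window j N \<omega> \<in> space (PiM {..N} (\<lambda>_. borel))" for \<omega>
    by (simp add: window_def space_PiM)
  ultimately show ?thesis
    unfolding low_window_def by (intro set_eqI) (simp add: Ball_def)
qed

lemma low_window_set_in_sets:
  "{z \<in> space (PiM {..N} (\<lambda>_. borel)). \<forall>n\<in>{1..N}. (\<Sum>i<n. s * z i) < real n * \<alpha>}
     \<in> sets (PiM {..N} (\<lambda>_. borel))"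
proof (rule sets.sets_Collect_countable_Ball)
  fix n
  have "(\<lambda>z. \<Sum>i<n. s * z i) \<in> borel_measurable (PiM {..N} (\<lambda>_. borel))"
    by (intro borel_measurable_sum borel_measurable_times borel_measurable_const
        measurable_PiM_coordinate)
  then show "{z \<in> space (PiM {..N} (\<lambda>_. borel)). (\<Sum>i<n. s * z i) < real n * \<alpha>}
      \<in> sets (PiM {..N} (\<lambda>_. borel :: real measure))"
    by measurable
qed

lemma low_window_in_F: "low_window s \<alpha> N j \<in> F"
  unfolding low_window_eq_vimage by (rule window_vimage_in_F[OF low_window_set_in_sets])

lemma V_low_window: "V (low_window s \<alpha> N j) = V (low_window s \<alpha> N 0)"
  unfolding low_window_eq_vimage by (rule V_window_vimage[OF low_window_set_in_sets])

lemma V_low_window_tendsto_0: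
  assumes s: "\<bar>s\<bar> \<le> 1" and \<alpha>: "\<alpha> < limsup_const s"
  shows "(\<lambda>N. V (low_window s \<alpha> N 0)) \<longlonglongrightarrow> 0"
proof -
  have "decseq (\<lambda>N. low_window s \<alpha> N 0)"
    by (auto simp: decseq_def low_window_def)
  with low_window_in_F
  have tendsto: "(\<lambda>N. V (low_window s \<alpha> N 0)) \<longlonglongrightarrow> V (\<Inter>N. low_window s \<alpha> N 0)"
    by (rule V_decseq_tendsto)
  have Inter_in_F: "(\<Inter>N. low_window s \<alpha> N 0) \<in> F"
    by (intro F_INT low_window_in_F)
  have "(\<Inter>N. low_window s \<alpha> N 0) \<subseteq> avg_event s \<alpha>"
  proof
    fix \<omega> assume \<omega>: "\<omega> \<in> (\<Inter>N. low_window s \<alpha> N 0)"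
    have "(\<Sum>k<n. s * Y (Suc k) \<omega>) < real n * \<alpha>" if "1 \<le> n" for n
    proof -
      from \<omega> have "\<omega> \<in> low_window s \<alpha> n 0" by blast
      with that show ?thesis by (auto simp: low_window_def)
    qed
    then show "\<omega> \<in> avg_event s \<alpha>"
      unfolding mem_avg_event by (intro limsup_avg_le_of_le less_imp_le)
  qed
  from V_eq_0_subset[OF Inter_in_F avg_event_in_F this V_avg_event[OF s \<alpha>]]
  have "V (\<Inter>N. low_window s \<alpha> N 0) = 0" .
  with tendsto show ?thesis by simp
qed

lemma partial_sum_ge_tiling:
  assumes s: "\<bar>s\<bar> \<le> 1"
  shows "real K * \<alpha> - (M + \<bar>\<alpha>\<bar>) * (\<Sum>j<K. indicator (low_window s \<alpha> N j) \<omega>) - (M + \<bar>\<alpha>\<bar>) * real N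
     \<le> (\<Sum>k<K. s * Y (Suc k) \<omega>)"
proof -
  define z where "z k = s * Y (Suc k) \<omega> - \<alpha>" for k
  have "- (M + \<bar>\<alpha>\<bar>) * (\<Sum>j\<in>{0..<K}. indicator {j. \<omega> \<in> low_window s \<alpha> N j} j)
      - (M + \<bar>\<alpha>\<bar>) * real N \<le> (\<Sum>k\<in>{0..<K}. z k)"
  proof (rule sum_ge_by_tiling)
    show "0 \<le> M + \<bar>\<alpha>\<bar>" using M_pos by simp
    show "- (M + \<bar>\<alpha>\<bar>) \<le> z k" for k
      using abs_mult_Y_le[OF s, of k \<omega>] abs_ge_self[of \<alpha>] unfolding z_def abs_le_iff by linarith
    fix i assume "i \<notin> {j. \<omega> \<in> low_window s \<alpha> N j}"
    then obtain n where n: "n \<in> {1..N}" "real n * \<alpha> \<le> (\<Sum>t<n. s * Y (i + 1 + t) \<omega>)"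
      by (auto simp: low_window_def not_less)
    have "(\<Sum>k\<in>{i..<i+n}. z k) = (\<Sum>t<n. s * Y (i + 1 + t) \<omega>) - real n * \<alpha>"
      using sum.shift_bounds_nat_ivl[of z 0 i n] by (simp add: z_def sum_subtractf atLeast0LessThan add.commute)
    with n show "\<exists>n\<in>{1..N}. 0 \<le> (\<Sum>k\<in>{i..<i+n}. z k)"
      by (intro bexI[of _ n]) simp_all
  qed
  moreover have "(\<Sum>k\<in>{0..<K}. z k) = (\<Sum>k<K. s * Y (Suc k) \<omega>) - real K * \<alpha>"
    by (simp add: z_def sum_subtractf atLeast0LessThan)
  ultimately show ?thesis by (simp add: atLeast0LessThan indicator_def algebra_simps)
qed

lemma sum_P_low_window_le:
  assumes "P \<in> PP"
  shows "(\<Sum>j<K. P (low_window s \<alpha> N j)) \<le> real K * V (low_window s \<alpha> N 0)"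
proof -
  have "P (low_window s \<alpha> N j) \<le> V (low_window s \<alpha> N 0)" for j
    using P_le_V[OF assms low_window_in_F, of s \<alpha> N j] V_low_window[of s \<alpha> N j] by simp
  then have "(\<Sum>j<K. P (low_window s \<alpha> N j)) \<le> (\<Sum>j<K. V (low_window s \<alpha> N 0))"
    by (rule sum_mono)
  then show ?thesis by simp
qed

context
  fixes s b B :: real and L :: "'l set" and G :: "nat \<Rightarrow> 'l \<Rightarrow> 'a set" and u \<beta> :: "'l \<Rightarrow> real"
  assumes s: "\<bar>s\<bar> \<le> 1" and L: "finite L" and G: "\<And>k l. G k l \<in> F"
    and \<beta>: "\<And>P k l. P \<in> PP \<Longrightarrow> l \<in> L \<Longrightarrow> u l * P (G k l) \<le> \<beta> l"
    and majorant: "\<And>K \<omega>. (\<Sum>k<K. s * Y (Suc k) \<omega>)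
      \<le> real K * b + B + (\<Sum>k<K. \<Sum>l\<in>L. u l * indicator (G k l) \<omega>)"
begin

lemma majorant_tiling_bound:
  assumes P: "P \<in> PP"
  shows "real K * (\<alpha> - b) - (M + \<bar>\<alpha>\<bar>) * real N - B
    \<le> real K * ((M + \<bar>\<alpha>\<bar>) * V (low_window s \<alpha> N 0) + (\<Sum>l\<in>L. \<beta> l))"
proof -
  define C where "C = M + \<bar>\<alpha>\<bar>"
  have C: "0 \<le> C" using M_pos by (simp add: C_def)
  have "real K * (\<alpha> - b) - C * real N - B \<le> (\<Sum>j<K. C * indicator (low_window s \<alpha> N j) \<omega>)
      + (\<Sum>p\<in>{..<K} \<times> L. u (snd p) * indicator (G (fst p) (snd p)) \<omega>)" for \<omega>
  proof -
    have "(\<Sum>k<K. \<Sum>l\<in>L. u l * indicator (G k l) \<omega>)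
        = (\<Sum>p\<in>{..<K} \<times> L. u (snd p) * indicator (G (fst p) (snd p)) \<omega>)"
      by (simp add: sum.cartesian_product case_prod_beta)
    moreover have "(\<Sum>j<K. C * indicator (low_window s \<alpha> N j) \<omega>)
        = C * (\<Sum>j<K. indicator (low_window s \<alpha> N j) \<omega>)"
      by (rule sum_distrib_left[symmetric])
    ultimately show ?thesis
      using partial_sum_ge_tiling[OF s, where K=K and \<alpha>=\<alpha> and N=N and \<omega>=\<omega>, folded C_def]
        majorant[where K=K and \<omega>=\<omega>] right_diff_distrib[of "real K" \<alpha> b]
      by linarith
  qed
  then have "real K * (\<alpha> - b) - C * real N - B \<le> (\<Sum>j<K. C * P (low_window s \<alpha> N j))
      + (\<Sum>p\<in>{..<K} \<times> L. u (snd p) * P (G (fst p) (snd p)))"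
    using L by (intro simple_fun_lower_bound2[OF P] low_window_in_F G) auto
  also have "\<dots> \<le> real K * (C * V (low_window s \<alpha> N 0)) + real K * (\<Sum>l\<in>L. \<beta> l)"
  proof (intro add_mono)
    show "(\<Sum>j<K. C * P (low_window s \<alpha> N j)) \<le> real K * (C * V (low_window s \<alpha> N 0))"
      using sum_P_low_window_le[OF P] C
      by (simp add: sum_distrib_left[symmetric] mult.left_commute mult_left_mono)
    have "(\<Sum>p\<in>{..<K} \<times> L. u (snd p) * P (G (fst p) (snd p))) \<le> (\<Sum>p\<in>{..<K} \<times> L. \<beta> (snd p))"
      using \<beta>[OF P] by (intro sum_mono) auto
    also have "\<dots> = real K * (\<Sum>l\<in>L. \<beta> l)"
      using sum.cartesian_product[of "\<lambda>_ l. \<beta> l" L "{..<K}"] by (simp add: case_prod_beta)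
    finally show "(\<Sum>p\<in>{..<K} \<times> L. u (snd p) * P (G (fst p) (snd p))) \<le> real K * (\<Sum>l\<in>L. \<beta> l)" .
  qed
  finally show ?thesis by (simp add: C_def distrib_left)
qed

lemma limsup_const_le_majorant: "limsup_const s \<le> b + (\<Sum>l\<in>L. \<beta> l)"
proof (rule dense_le)
  fix \<alpha> assume \<alpha>: "\<alpha> < limsup_const s"
  obtain P where P: "P \<in> PP" by (rule some_P)
  define C where "C = M + \<bar>\<alpha>\<bar>"
  have bound: "\<alpha> - b \<le> C * V (low_window s \<alpha> N 0) + (\<Sum>l\<in>L. \<beta> l)" for N
  proof (rule le_of_le_plus_div_nat[where b="C * real N + B"])
    fix K :: nat assume "1 \<le> K"
    with majorant_tiling_bound[OF P, where K=K and \<alpha>=\<alpha> and N=N, folded C_def]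
    show "\<alpha> - b \<le> C * V (low_window s \<alpha> N 0) + (\<Sum>l\<in>L. \<beta> l) + (C * real N + B) / real K"
      by (simp add: field_simps)
  qed
  have "(\<lambda>N. C * V (low_window s \<alpha> N 0) + (\<Sum>l\<in>L. \<beta> l)) \<longlonglongrightarrow> C * 0 + (\<Sum>l\<in>L. \<beta> l)"
    by (intro tendsto_intros V_low_window_tendsto_0[OF s \<alpha>])
  with bound have "\<alpha> - b \<le> C * 0 + (\<Sum>l\<in>L. \<beta> l)"
    by (intro LIMSEQ_le_const) auto
  then show "\<alpha> \<le> b + (\<Sum>l\<in>L. \<beta> l)" by simp
qed

end

corollary limsup_const_le_pointwise_majorant:
  fixes G :: "nat \<Rightarrow> 'l \<Rightarrow> 'a set" and u \<beta> :: "'l \<Rightarrow> real"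
  assumes s: "\<bar>s\<bar> \<le> 1" and L: "finite L" and G: "\<And>k l. G k l \<in> F"
    and \<beta>: "\<And>P k l. P \<in> PP \<Longrightarrow> l \<in> L \<Longrightarrow> u l * P (G k l) \<le> \<beta> l"
    and majorant: "\<And>k \<omega>. s * Y (Suc k) \<omega> \<le> b + (\<Sum>l\<in>L. u l * indicator (G k l) \<omega>)"
  shows "limsup_const s \<le> b + (\<Sum>l\<in>L. \<beta> l)"
proof (rule limsup_const_le_majorant[where G=G and u=u and B=0])
  fix K \<omega>
  have "(\<Sum>k<K. s * Y (Suc k) \<omega>) \<le> (\<Sum>k<K. b + (\<Sum>l\<in>L. u l * indicator (G k l) \<omega>))"
    by (intro sum_mono majorant)
  then show "(\<Sum>k<K. s * Y (Suc k) \<omega>) \<le> real K * b + 0 + (\<Sum>k<K. \<Sum>l\<in>L. u l * indicator (G k l) \<omega>)"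
    by (simp add: sum.distrib)
qed (use s L G \<beta> in auto)

lemma limsup_const_add_le_0: "limsup_const 1 + limsup_const (-1) \<le> 0"
proof -
  have "limsup_const (-1) \<le> - limsup_const 1"
  proof (rule dense_le)
    fix \<alpha> assume \<alpha>: "\<alpha> < limsup_const (-1)"
    define C where "C = M + \<bar>\<alpha>\<bar>"
    have C: "0 \<le> C" using M_pos by (simp add: C_def)
    have bound: "limsup_const 1 \<le> - \<alpha> + C * V (low_window (-1) \<alpha> N 0)" for N
    proof -
      have "limsup_const 1 \<le> - \<alpha> + (\<Sum>l\<in>(UNIV :: unit set). C * V (low_window (-1) \<alpha> N 0))"
      proof (rule limsup_const_le_majorant[where G="\<lambda>k _. low_window (-1) \<alpha> N k"
            and u="\<lambda>_. C" and B="C * real N"])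
        show "C * P (low_window (-1) \<alpha> N k) \<le> C * V (low_window (-1) \<alpha> N 0)" if "P \<in> PP" for P k
          using P_le_V[OF that low_window_in_F, of "-1" \<alpha> N k] V_low_window[of "-1" \<alpha> N k] C
          by (simp add: mult_left_mono)
        fix K \<omega>
        show "(\<Sum>k<K. 1 * Y (Suc k) \<omega>) \<le> real K * - \<alpha> + C * real N
            + (\<Sum>k<K. \<Sum>l\<in>(UNIV :: unit set). C * indicator (low_window (-1) \<alpha> N k) \<omega>)"
          using partial_sum_ge_tiling[of "-1", where K=K and \<alpha>=\<alpha> and N=N and \<omega>=\<omega>, folded C_def]
          by (simp add: sum_negf sum_distrib_left)
      qed (auto intro: low_window_in_F)
      then show ?thesis by simp
    qed
    have "(\<lambda>N. - \<alpha> + C * V (low_window (-1) \<alpha> N 0)) \<longlonglongrightarrow> - \<alpha> + C * 0"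
      by (intro tendsto_intros V_low_window_tendsto_0 \<alpha>) simp
    with bound have "limsup_const 1 \<le> - \<alpha> + C * 0"
      by (intro LIMSEQ_le_const) auto
    then show "\<alpha> \<le> - limsup_const 1" by simp
  qed
  then show ?thesis by simp
qed

lemma limsup_const_add_ge_0: "0 \<le> limsup_const 1 + limsup_const (-1)"
proof (rule ccontr)
  let ?c = "limsup_const 1" and ?c' = "limsup_const (-1)"
  assume "\<not> 0 \<le> ?c + ?c'"
  have "avg_event 1 ?c \<inter> avg_event (-1) ?c' = {}"
  proof (rule ccontr)
    assume "avg_event 1 ?c \<inter> avg_event (-1) ?c' \<noteq> {}"
    then obtain \<omega> where "limsup_avg_le (\<lambda>n. \<Sum>k<n. Y (Suc k) \<omega>) ?c"
      "limsup_avg_le (\<lambda>n. - (\<Sum>k<n. Y (Suc k) \<omega>)) ?c'"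
      by (auto simp: mem_avg_event sum_negf)
    then have "0 \<le> ?c + ?c'" by (rule limsup_avg_le_add_nonneg)
    with \<open>\<not> 0 \<le> ?c + ?c'\<close> show False by simp
  qed
  then have "UNIV = - avg_event 1 ?c \<union> - avg_event (-1) ?c'" by auto
  moreover have "V (- avg_event 1 ?c \<union> - avg_event (-1) ?c') = 0"
    using V_Compl_avg_event[of 1 ?c] V_Compl_avg_event[of "-1" ?c'] avg_event_in_F
    by (intro V_eq_0_Un F_Compl) auto
  ultimately show False by simp
qed

lemma limsup_const_uminus: "limsup_const (-1) = - limsup_const 1"
  using limsup_const_add_le_0 limsup_const_add_ge_0 by simp

lemma lower_prob_averages_tendsto:
  "v {\<omega>. (\<lambda>n. (\<Sum>k=1..n. Y k \<omega>) / real n) \<longlonglongrightarrow> limsup_const 1} = 1"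
proof -
  let ?c = "limsup_const 1"
  have "{\<omega>. (\<lambda>n. (\<Sum>k=1..n. Y k \<omega>) / real n) \<longlonglongrightarrow> ?c} = avg_event 1 ?c \<inter> avg_event (-1) (- ?c)"
    by (auto simp: sum.atLeast1_atMost_eq tendsto_average_iff mem_avg_event sum_negf)
  moreover have "V (- avg_event 1 ?c \<union> - avg_event (-1) (- ?c)) = 0"
    using V_Compl_avg_event[of 1 ?c] V_Compl_avg_event[of "-1" "- ?c"] limsup_const_uminus
      avg_event_in_F by (intro V_eq_0_Un F_Compl) auto
  moreover have "avg_event 1 ?c \<inter> avg_event (-1) (- ?c) \<in> F"
    by (intro F.Int avg_event_in_F)
  ultimately show ?thesis by (simp add: v_eq_1_minus_V_Compl)
qed

definition level_set :: "nat \<Rightarrow> real \<Rightarrow> 'a set" where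
  "level_set k t = {\<omega>. t \<le> Y (Suc k) \<omega>}"

lemma level_set_eq_vimage:
  "level_set k t = window k 0 -` {z \<in> space (PiM {..0} (\<lambda>_. borel)). t \<le> z 0}"
  "- level_set k t = window k 0 -` {z \<in> space (PiM {..0} (\<lambda>_. borel)). z 0 < t}"
proof -
  have "window k 0 \<omega> \<in> space (PiM {..0} (\<lambda>_. borel :: real measure))" "window k 0 \<omega> 0 = Y (Suc k) \<omega>"
    for \<omega> by (simp_all add: window_def space_PiM)
  then show "level_set k t = window k 0 -` {z \<in> space (PiM {..0} (\<lambda>_. borel)). t \<le> z 0}"
    "- level_set k t = window k 0 -` {z \<in> space (PiM {..0} (\<lambda>_. borel)). z 0 < t}"
    unfolding level_set_def vimage_def by (simp_all add: not_le set_eq_iff)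
qed

lemma level_set_set_in_sets:
  "{z \<in> space (PiM {..0} (\<lambda>_. borel)). t \<le> z 0} \<in> sets (PiM {..0::nat} (\<lambda>_. borel :: real measure))"
  "{z \<in> space (PiM {..0} (\<lambda>_. borel)). z 0 < t} \<in> sets (PiM {..0::nat} (\<lambda>_. borel :: real measure))"
proof -
  have "(\<lambda>z. z 0) \<in> borel_measurable (PiM {..0::nat} (\<lambda>_. borel :: real measure))"
    by (rule measurable_PiM_coordinate)
  then show "{z \<in> space (PiM {..0} (\<lambda>_. borel)). t \<le> z 0} \<in> sets (PiM {..0::nat} (\<lambda>_. borel :: real measure))"
    "{z \<in> space (PiM {..0} (\<lambda>_. borel)). z 0 < t} \<in> sets (PiM {..0::nat} (\<lambda>_. borel :: real measure))"
    by measurable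
qed

lemma level_set_in_F: "level_set k t \<in> F"
  unfolding level_set_eq_vimage(1) by (rule window_vimage_in_F[OF level_set_set_in_sets(1)])

lemma V_level_set: "V (level_set k t) = V (level_set 0 t)"
  unfolding level_set_eq_vimage(1) by (rule V_window_vimage[OF level_set_set_in_sets(1)])

lemma v_level_set: "v (level_set k t) = v (level_set 0 t)"
proof -
  have "V (- level_set k t) = V (- level_set 0 t)"
    unfolding level_set_eq_vimage(2) by (rule V_window_vimage[OF level_set_set_in_sets(2)])
  then show ?thesis using level_set_in_F by (simp add: v_eq_1_minus_V_Compl)
qed

lemma sum_mult_indicator_level_set:
  fixes h :: real
  shows "finite A \<Longrightarrow> (\<Sum>i\<in>A. h * indicator (level_set k (f i)) \<omega>) = h * card (A \<inter> {i. f i \<le> Y (Suc k) \<omega>})"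
  by (simp add: indicator_def level_set_def flip: sum_distrib_left)

lemma antimono_level_set:
  assumes "\<mu> = V \<or> \<mu> = v"
  shows "antimono (\<lambda>t. \<mu> (level_set 0 t))"
proof -
  have "level_set 0 t' \<subseteq> level_set 0 t" if "t \<le> t'" for t t'
    using that by (auto simp: level_set_def)
  then show ?thesis
    using assms V_mono v_mono level_set_in_F unfolding antimono_def by metis
qed

lemma choquet_eq_integral_level_set:
  assumes "\<mu> = V \<or> \<mu> = v"
  shows "choquet \<mu> (Y 1) = integral {-M..M} (\<lambda>t. \<mu> (level_set 0 t)) - M"
proof -
  have "antimono (\<lambda>t. \<mu> (level_set 0 t))" using assms by (rule antimono_level_set)
  moreover have "0 \<le> \<mu> (level_set 0 t) \<and> \<mu> (level_set 0 t) \<le> 1" for t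
    using assms V_nonneg V_le_1 v_nonneg v_le_1 level_set_in_F by metis
  moreover have "\<mu> UNIV = 1" "\<mu> {} = 0" using assms by auto
  moreover have "level_set 0 = (\<lambda>t. {\<omega>. t \<le> Y 1 \<omega>})" by (simp add: level_set_def[abs_def])
  ultimately show ?thesis
    using choquet_eq_integral[OF M_pos, of "Y 1" \<mu>] abs_Y_le[of 0] by simp
qed

lemma limsup_const_le_choquet_V: "limsup_const 1 \<le> choquet V (Y 1)"
proof (rule le_of_le_plus_div_nat[where b="2 * M"])
  fix m :: nat assume m: "1 \<le> m"
  define h where "h = 2 * M / real m"
  define t where "t i = - M + real i * h" for i
  have h: "0 < h" unfolding h_def using M_pos m by simp
  have top: "- M + real m * h = M" unfolding h_def using m by simp
  have "limsup_const 1 \<le> (- M + h) + (\<Sum>i\<in>{1..m}. h * V (level_set 0 (t i)))"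
  proof (rule limsup_const_le_pointwise_majorant[where G="\<lambda>k i. level_set k (t i)" and u="\<lambda>_. h"])
    show "h * P (level_set k (t i)) \<le> h * V (level_set 0 (t i))" if "P \<in> PP" for P k i
      using P_le_V[OF that level_set_in_F, of k "t i"] V_level_set[of k "t i"] h by simp
    fix k \<omega>
    have "Y (Suc k) \<omega> \<le> - M + h + h * card ({1..m} \<inter> {i. t i \<le> Y (Suc k) \<omega>})"
      using le_grid_count[OF h, where a="- M" and y="Y (Suc k) \<omega>" and m=m] abs_Y_le[of k \<omega>] top
      by (simp add: abs_le_iff t_def)
    then show "1 * Y (Suc k) \<omega> \<le> - M + h + (\<Sum>i\<in>{1..m}. h * indicator (level_set k (t i)) \<omega>)"
      by (subst sum_mult_indicator_level_set) simp_all
  qed (auto intro: level_set_in_F)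
  also have "(\<Sum>i\<in>{1..m}. h * V (level_set 0 (t i))) \<le> integral {-M..M} (\<lambda>t. V (level_set 0 t))"
    using antimono_integral_bounds[OF antimono_level_set[of V] h, where m=m and a="- M"] top
    by (simp add: t_def sum_distrib_left)
  finally show "limsup_const 1 \<le> choquet V (Y 1) + 2 * M / real m"
    using choquet_eq_integral_level_set[of V] by (simp add: h_def)
qed

lemma choquet_v_le_limsup_const: "choquet v (Y 1) \<le> limsup_const 1"
proof (rule le_of_le_plus_div_nat[where b="2 * M"])
  fix m :: nat assume m: "1 \<le> m"
  define h where "h = 2 * M / real m"
  define t where "t i = - M + real i * h" for i
  have h: "0 < h" unfolding h_def using M_pos m by simp
  have top: "- M + real m * h = M" unfolding h_def using m by simp
  have "limsup_const (-1) \<le> (M + h) + (\<Sum>i<m. - h * v (level_set 0 (t i)))"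
  proof (rule limsup_const_le_pointwise_majorant[where G="\<lambda>k i. level_set k (t i)" and u="\<lambda>_. - h"])
    show "- h * P (level_set k (t i)) \<le> - h * v (level_set 0 (t i))" if "P \<in> PP" for P k i
      using v_le_P[OF that level_set_in_F, of k "t i"] v_level_set[of k "t i"] h by simp
    fix k \<omega>
    have "- M + h * card ({..<m} \<inter> {i. t i \<le> Y (Suc k) \<omega>}) \<le> Y (Suc k) \<omega> + h"
      using grid_count_le[OF h, where a="- M" and y="Y (Suc k) \<omega>" and m=m] abs_Y_le[of k \<omega>]
      by (simp add: abs_le_iff t_def)
    then show "-1 * Y (Suc k) \<omega> \<le> M + h + (\<Sum>i<m. - h * indicator (level_set k (t i)) \<omega>)"
      by (subst sum_mult_indicator_level_set) simp_all
  qed (auto intro: level_set_in_F)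
  moreover have "integral {-M..M} (\<lambda>t. v (level_set 0 t)) \<le> (\<Sum>i<m. h * v (level_set 0 (t i)))"
    using antimono_integral_bounds[OF antimono_level_set[of v] h, where m=m and a="- M"] top
    by (simp add: t_def sum_distrib_left)
  ultimately show "choquet v (Y 1) \<le> limsup_const 1 + 2 * M / real m"
    using choquet_eq_integral_level_set[of v] limsup_const_uminus
    by (simp add: h_def sum_negf)
qed

end

theorem theorem8:
  fixes F :: "'a set set" and \<P> :: "('a set \<Rightarrow> real) set" and Y :: "nat \<Rightarrow> 'a \<Rightarrow> real"
  assumes "sigma_algebra UNIV F"
    and "\<P> \<noteq> {}"
    and "\<forall>P\<in>\<P>. fa_prob F P"
    and "continuous_cap F (upper_prob \<P>)"
    and "continuous_cap F (lower_prob \<P>)"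
    and "\<forall>n\<ge>1. random_var F (Y n)"
    and "\<exists>M. \<forall>n\<ge>1. \<forall>\<omega>. \<bar>Y n \<omega>\<bar> \<le> M"
    and "stationary (upper_prob \<P>) Y"
    and "ergodic (upper_prob \<P>) Y"
  shows "\<exists>c::real.
     lower_prob \<P> {\<omega>. (\<lambda>n. (\<Sum>k=1..n. Y k \<omega>) / real n) \<longlonglongrightarrow> c} = 1 \<and>
     (concave_cap F (upper_prob \<P>) \<longrightarrow>
        choquet (lower_prob \<P>) (Y 1) \<le> c \<and> c \<le> choquet (upper_prob \<P>) (Y 1))"
proof -
  obtain M where M: "\<forall>n\<ge>1. \<forall>\<omega>. \<bar>Y n \<omega>\<bar> \<le> M" using assms(7) by blast
  have bound: "\<bar>Y n \<omega>\<bar> \<le> M" if "1 \<le> n" for n \<omega> using M that by blast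
  have "0 < M + 1" using bound[of 1 undefined] abs_ge_zero[of "Y 1 undefined"] by linarith
  moreover have "\<forall>n\<ge>1. \<forall>\<omega>. \<bar>Y n \<omega>\<bar> \<le> M + 1"
  proof (intro allI impI)
    fix n :: nat and \<omega> assume "1 \<le> n"
    from bound[OF this, of \<omega>] show "\<bar>Y n \<omega>\<bar> \<le> M + 1" by linarith
  qed
  ultimately interpret ergodic_process F \<P> Y "M + 1"
    using assms by (intro ergodic_process.intro prob_family.intro ergodic_process_axioms.intro)
  show ?thesis
    using lower_prob_averages_tendsto choquet_v_le_limsup_const limsup_const_le_choquet_V by blast
qed

end
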